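(* Let $G$ be a finite group, let $s \in G^{\#}$ and let $H \in \mathcal{M}(G,s)$ with $b(G,G/H) = b$. Then any total dominating set for $\Gamma(G)$ consisting only of conjugates of $s$ has size at least $b$.
   Context: $G^{\#}$ is the set of non-identity elements of $G$. The generating graph $\Gamma(G)$ has vertex set $G^{\#}$, with $x,y$ adjacent iff $G=\langle x,y\rangle$. A subset $S\subseteq G^{\#}$ is a total dominating set for $\Gamma(G)$ if for every $g\in G^{\#}$ there exists $s\in S$ with $G=\langle g,s\rangle$. $\mathcal{M}(G,g)$ denotes the set of maximal subgroups of $G$ containing $g$. For a group acting faithfully on a finite set $\Omega$, a base is a subset of $\Omega$ whose pointwise stabiliser is trivial and $b(G,\Omega)$ is the minimal size of a base; here $G$ acts on the coset space $G/H$, and $b(G,G/H)\leqslant c$ iff there exist $g_1,\dots,g_c\in G$ with $\bigcap_i H^{g_i}=1$. *)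

theory Defs
  imports "HOL-Algebra.Algebra"
begin

definition maximal_subgroup :: "('a, 'b) monoid_scheme \<Rightarrow> 'a set \<Rightarrow> bool" where
  "maximal_subgroup G H \<longleftrightarrow> subgroup H G \<and> H \<noteq> carrier G \<and>
     (\<forall>K. subgroup K G \<longrightarrow> H \<subseteq> K \<longrightarrow> K = H \<or> K = carrier G)"

definition conj_subgroup :: "('a, 'b) monoid_scheme \<Rightarrow> 'a set \<Rightarrow> 'a \<Rightarrow> 'a set" where
  "conj_subgroup G H g = {inv\<^bsub>G\<^esub> g \<otimes>\<^bsub>G\<^esub> h \<otimes>\<^bsub>G\<^esub> g | h. h \<in> H}"

text \<open>There exist g_1,...,g_c in G with the intersection of the conjugates H^{g_i} trivial
  (for c = 0 the empty intersection is all of G).\<close>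
definition has_base_of_size :: "('a, 'b) monoid_scheme \<Rightarrow> 'a set \<Rightarrow> nat \<Rightarrow> bool" where
  "has_base_of_size G H c \<longleftrightarrow>
     (\<exists>gs. (\<forall>i<c. gs i \<in> carrier G) \<and>
           carrier G \<inter> (\<Inter>i<c. conj_subgroup G H (gs i)) = {\<one>\<^bsub>G\<^esub>})"

text \<open>b(G,G/H) = b: b is the minimal size of a base for the action of G on G/H.\<close>
definition base_size_is :: "('a, 'b) monoid_scheme \<Rightarrow> 'a set \<Rightarrow> nat \<Rightarrow> bool" where
  "base_size_is G H b \<longleftrightarrow> has_base_of_size G H b \<and> (\<forall>c<b. \<not> has_base_of_size G H c)"

text \<open>Total dominating set of the generating graph: S \<subseteq> G^# and every non-identity
  element together with some element of S generates G.\<close>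
definition total_dominating_set :: "('a, 'b) monoid_scheme \<Rightarrow> 'a set \<Rightarrow> bool" where
  "total_dominating_set G S \<longleftrightarrow> S \<subseteq> carrier G - {\<one>\<^bsub>G\<^esub>} \<and>
     (\<forall>g \<in> carrier G - {\<one>\<^bsub>G\<^esub>}. \<exists>t \<in> S. generate G {g, t} = carrier G)"

end

theory Submission
  imports Defs
begin

text \<open>Suppose \<open>|S| < b\<close> and write each \<open>t \<in> S\<close> as \<open>s\<^sup>x\<^sub>t\<close>. Then \<open>t\<close> lies in the proper subgroup
  \<open>H\<^sup>x\<^sub>t\<close>, and since the \<open>|S|\<close> conjugates \<open>H\<^sup>x\<^sub>t\<close> do not form a base, their intersection contains
  some \<open>g \<noteq> 1\<close>. No \<open>t \<in> S\<close> generates \<open>G\<close> together with \<open>g\<close>, as both lie in \<open>H\<^sup>x\<^sub>t\<close>.\<close>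

lemma conj_subgroup_eq_cosets: "conj_subgroup G H x = inv\<^bsub>G\<^esub> x <#\<^bsub>G\<^esub> H #>\<^bsub>G\<^esub> x"
  unfolding conj_subgroup_def l_coset_def r_coset_def by blast

lemma conj_subgroup_memI: "h \<in> H \<Longrightarrow> inv\<^bsub>G\<^esub> x \<otimes>\<^bsub>G\<^esub> h \<otimes>\<^bsub>G\<^esub> x \<in> conj_subgroup G H x"
  unfolding conj_subgroup_def by blast

lemma (in group) subgroup_conj_subgroup:
  assumes "subgroup H G" and "x \<in> carrier G"
  shows "subgroup (conj_subgroup G H x) G"
  using subgroup_conjugation_is_surj1 assms by (simp add: conj_subgroup_eq_cosets)

lemma (in group) conj_subgroup_neq_carrier:
  assumes "subgroup H G" and "x \<in> carrier G" and "H \<noteq> carrier G"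
  shows "conj_subgroup G H x \<noteq> carrier G"
proof
  assume "conj_subgroup G H x = carrier G"
  then have "inv x <# H #> x = carrier G"
    by (simp add: conj_subgroup_eq_cosets)
  moreover have "H = x <# (inv x <# H #> x) #> inv x"
    using subgroup_conjugation_is_surj0 assms(2) subgroup.subset[OF assms(1)] by simp
  ultimately have "H = x <# carrier G #> inv x"
    by simp
  also have "\<dots> = carrier G"
    using assms(2) by (simp add: coset_join2 coset_join3 subgroup_self)
  finally show False using assms(3) by contradiction
qed

lemma (in group) generate_neq_carrier_if_in_proper_subgroup:
  assumes "subgroup K G" and "K \<noteq> carrier G" and "A \<subseteq> K"
  shows "generate G A \<noteq> carrier G"
  using generate_subgroup_incl[OF assms(3,1)] subgroup.subset[OF assms(1)] assms(2) by blast

lemma (in group) has_base_of_size_if_total_dominating_in_conjugates: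
  assumes H: "subgroup H G" "H \<noteq> carrier G"
    and S: "total_dominating_set G S" "finite S"
    and conj: "\<forall>t \<in> S. \<exists>x \<in> carrier G. t \<in> conj_subgroup G H x"
  shows "has_base_of_size G H (card S)"
proof -
  obtain f where f: "bij_betw f {..<card S} S"
    using S(2) ex_bij_betw_nat_finite lessThan_atLeast0 by metis
  have "\<forall>i \<in> {..<card S}. \<exists>x. x \<in> carrier G \<and> f i \<in> conj_subgroup G H x"
    using conj bij_betwE[OF f] by blast
  then obtain gs where "\<forall>i \<in> {..<card S}. gs i \<in> carrier G \<and> f i \<in> conj_subgroup G H (gs i)"
    by (rule bchoice[THEN exE])
  then have gs: "gs i \<in> carrier G \<and> f i \<in> conj_subgroup G H (gs i)" if "i < card S" for i
    using that by blast
  have "carrier G \<inter> (\<Inter>i<card S. conj_subgroup G H (gs i)) \<subseteq> {\<one>}"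
  proof
    fix g assume g: "g \<in> carrier G \<inter> (\<Inter>i<card S. conj_subgroup G H (gs i))"
    show "g \<in> {\<one>}"
    proof (rule ccontr)
      assume "g \<notin> {\<one>}"
      with g S(1) obtain t where t: "t \<in> S" and gen: "generate G {g, t} = carrier G"
        unfolding total_dominating_set_def by blast
      obtain i where i: "i < card S" "t = f i"
        using t bij_betw_imp_surj_on[OF f] by blast
      have "{g, t} \<subseteq> conj_subgroup G H (gs i)"
        using g gs i by blast
      moreover have "subgroup (conj_subgroup G H (gs i)) G"
        using subgroup_conj_subgroup H(1) gs[OF i(1)] by blast
      moreover have "conj_subgroup G H (gs i) \<noteq> carrier G"
        using conj_subgroup_neq_carrier H gs[OF i(1)] by blast
      ultimately show False
        using generate_neq_carrier_if_in_proper_subgroup gen by blast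
    qed
  qed
  moreover have "\<one> \<in> conj_subgroup G H (gs i)" if "i < card S" for i
    using subgroup.one_closed subgroup_conj_subgroup H(1) gs that by blast
  ultimately show ?thesis
    unfolding has_base_of_size_def using gs by blast
qed

theorem corollary2p3:
  fixes G :: "('a, 'b) monoid_scheme" and s :: 'a and H :: "'a set" and b :: nat and S :: "'a set"
  assumes "group G" and "finite (carrier G)"
    and "s \<in> carrier G" and "s \<noteq> \<one>\<^bsub>G\<^esub>"
    and "maximal_subgroup G H" and "s \<in> H"
    and "base_size_is G H b"
    and "total_dominating_set G S"
    and "\<forall>t \<in> S. \<exists>x \<in> carrier G. t = inv\<^bsub>G\<^esub> x \<otimes>\<^bsub>G\<^esub> s \<otimes>\<^bsub>G\<^esub> x"
  shows "b \<le> card S"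
proof -
  interpret group G by fact
  have H: "subgroup H G" "H \<noteq> carrier G"
    using assms(5) unfolding maximal_subgroup_def by auto
  have "finite S"
    using assms(2,8) finite_subset unfolding total_dominating_set_def by blast
  moreover have "\<forall>t \<in> S. \<exists>x \<in> carrier G. t \<in> conj_subgroup G H x"
    using assms(6,9) conj_subgroup_memI by metis
  ultimately have "has_base_of_size G H (card S)"
    using has_base_of_size_if_total_dominating_in_conjugates H assms(8) by blast
  then show ?thesis
    using assms(7) unfolding base_size_is_def by (meson not_le)
qed

end
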